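(* Let $C$ be a set and let $L_1,L_2$ be objects of $\mathrm{SList}(C)$. Sending a morphism $L_1\to L_2$ to its associated bijection of index sets defines a bijection between the set of morphisms $L_1\to L_2$ in $\mathrm{SList}(C)$ and the set of bijections $\phi:\{0,\dots,\mathrm{length}(L_2)-1\}\xrightarrow{\sim}\{0,\dots,\mathrm{length}(L_1)-1\}$ such that $L_1[\phi(i)]=L_2[i]$ for all $i$.
   Context: $\mathrm{SList}(C)$ is the category whose objects are finite lists of elements of $C$ and whose morphisms are generated by $\mathrm{sw}_{a,b,l}:a::b::l\to b::a::l$ and $x::_mf:x::l\to x::l'$ (for $f:l\to l'$), subject to: functoriality of $x::_m-$, naturality of $\mathrm{sw}_{a,b,l}$ in $l$, $\mathrm{sw}_{b,a,l}\circ\mathrm{sw}_{a,b,l}=\mathrm{Id}$, and the hexagon relation $\mathrm{sw}_{b,c,a::l}\circ(b::_m\mathrm{sw}_{a,c,l})\circ\mathrm{sw}_{a,b,c::l}=(c::_m\mathrm{sw}_{a,b,l})\circ\mathrm{sw}_{a,c,b::l}\circ(a::_m\mathrm{sw}_{b,c,l})$. $L[i]$ denotes the $i$-th entry (0-indexed) of the list $L$. The bijection associated to a morphism $f:L_1\to L_2$ is the map $\{0,\dots,\mathrm{length}(L_2)-1\}\to\{0,\dots,\mathrm{length}(L_1)-1\}$ obtained by restricting the permutation of $\mathbb{N}$ given by the image of $w(f)$ under the homomorphism $\overline{\mathrm{A}_\infty}\to\mathrm{Perm}(\mathbb{N})$, $s_k\mapsto(k\ k+1)$; here $w$ is the functor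 $\mathrm{SList}(C)\to(\mathrm{B}\overline{\mathrm{A}_\infty})^{\mathrm{op}}$ with $w(\mathrm{sw}_{a,b,l})=s_0$ and $w(x::_mf)$ obtained from $w(f)$ by the shift $s_i\mapsto s_{i+1}$ ($\overline{\mathrm{A}_\infty}$ being the Coxeter group with generators $s_i$, $i\in\mathbb{N}$, relations $s_i^2=e$, $(s_is_{i+1})^3=e$, $(s_is_j)^2=e$ for $|i-j|>1$). Concretely, $\mathrm{sw}_{a,b,l}$ corresponds to the transposition of indices $0$ and $1$, and $x::_mf$ fixes index $0$ and acts as the bijection of $f$ shifted by one on the remaining indices. *)

theory Defs
  imports "HOL-Library.FuncSet"
begin

text \<open>Syntactic morphism terms of SList(C), with C a type 'c.
  MComp g f denotes g composed after f.\<close>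
datatype 'c mterm =
    MId "'c list"
  | MSw 'c 'c "'c list"
  | MCons 'c "'c mterm"
  | MComp "'c mterm" "'c mterm"

inductive mtyped :: "'c mterm \<Rightarrow> 'c list \<Rightarrow> 'c list \<Rightarrow> bool" where
  ty_id: "mtyped (MId l) l l"
| ty_sw: "mtyped (MSw a b l) (a # b # l) (b # a # l)"
| ty_cons: "mtyped f l l' \<Longrightarrow> mtyped (MCons x f) (x # l) (x # l')"
| ty_comp: "mtyped f l1 l2 \<Longrightarrow> mtyped g l2 l3 \<Longrightarrow> mtyped (MComp g f) l1 l3"

inductive meqv :: "'c mterm \<Rightarrow> 'c mterm \<Rightarrow> bool" where
  eq_refl: "mtyped f l1 l2 \<Longrightarrow> meqv f f"
| eq_sym: "meqv f g \<Longrightarrow> meqv g f"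
| eq_trans: "meqv f g \<Longrightarrow> meqv g h \<Longrightarrow> meqv f h"
| eq_cong_cons: "meqv f g \<Longrightarrow> meqv (MCons x f) (MCons x g)"
| eq_cong_comp: "meqv f f' \<Longrightarrow> meqv g g' \<Longrightarrow> mtyped f l1 l2 \<Longrightarrow> mtyped g l2 l3
      \<Longrightarrow> meqv (MComp g f) (MComp g' f')"
| eq_id_left: "mtyped f l1 l2 \<Longrightarrow> meqv (MComp (MId l2) f) f"
| eq_id_right: "mtyped f l1 l2 \<Longrightarrow> meqv (MComp f (MId l1)) f"
| eq_assoc: "mtyped f l1 l2 \<Longrightarrow> mtyped g l2 l3 \<Longrightarrow> mtyped h l3 l4
      \<Longrightarrow> meqv (MComp h (MComp g f)) (MComp (MComp h g) f)"
| eq_cons_id: "meqv (MCons x (MId l)) (MId (x # l))"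
| eq_cons_comp: "mtyped f l1 l2 \<Longrightarrow> mtyped g l2 l3
      \<Longrightarrow> meqv (MCons x (MComp g f)) (MComp (MCons x g) (MCons x f))"
| eq_nat: "mtyped f l l'
      \<Longrightarrow> meqv (MComp (MCons b (MCons a f)) (MSw a b l)) (MComp (MSw a b l') (MCons a (MCons b f)))"
| eq_inv: "meqv (MComp (MSw b a l) (MSw a b l)) (MId (a # b # l))"
| eq_hex: "meqv (MComp (MSw b c (a # l)) (MComp (MCons b (MSw a c l)) (MSw a b (c # l))))
               (MComp (MCons c (MSw a b l)) (MComp (MSw a c (b # l)) (MCons a (MSw b c l))))"

definition slist_rel :: "'c list \<Rightarrow> 'c list \<Rightarrow> ('c mterm \<times> 'c mterm) set" where
  "slist_rel L1 L2 = {(f, g). mtyped f L1 L2 \<and> mtyped g L1 L2 \<and> meqv f g}"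

definition slist_hom :: "'c list \<Rightarrow> 'c list \<Rightarrow> 'c mterm set set" where
  "slist_hom L1 L2 = {f. mtyped f L1 L2} // slist_rel L1 L2"

text \<open>Permutation of the naturals associated to a term (the image of w(f) in Perm(N)):
  sw is the transposition (0 1), MCons fixes 0 and shifts, and composition is
  contravariant since w lands in the opposite category.\<close>
fun mperm :: "'c mterm \<Rightarrow> nat \<Rightarrow> nat" where
  "mperm (MId l) = id"
| "mperm (MSw a b l) = (\<lambda>i. if i = 0 then 1 else if i = 1 then 0 else i)"
| "mperm (MCons x f) = (\<lambda>i. if i = 0 then 0 else Suc (mperm f (i - 1)))"
| "mperm (MComp g f) = mperm f \<circ> mperm g"

definition assoc_bij :: "'c list \<Rightarrow> 'c mterm set \<Rightarrow> nat \<Rightarrow> nat" where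
  "assoc_bij L2 X = the_elem ((\<lambda>f. restrict (mperm f) {..<length L2}) ` X)"

end

theory Submission
  imports Defs
begin

text \<open>
  The relations of SList(C) all hold in the symmetric groups, so \<^const>\<open>mperm\<close> is constant on
  equivalence classes, and it always yields a bijection matching the entries of the two lists.
  Conversely, a bijection \<open>\<phi>\<close> is realised by the normal form that first brings the entry
  \<open>L\<^sub>1[\<phi>(0)]\<close> to the front by successive swaps and then recurses on the remaining list.
  For faithfulness one shows that every morphism is equivalent to such a normal form; normal forms
  are visibly determined by their permutation. Normal forms are closed under post-composition with
  a generator: for a swap this comes down to the identity that swapping the first two entries after
  bringing entries \<open>p\<close>, \<open>q\<close> to the front is the same as bringing \<open>q\<close>, \<open>p\<close> to the front,
  which follows by induction from the hexagon and naturality relations.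
\<close>

section \<open>Typing and soundness\<close>

fun mtype :: "'c mterm \<Rightarrow> ('c list \<times> 'c list) option" where
  "mtype (MId l) = Some (l, l)"
| "mtype (MSw a b l) = Some (a # b # l, b # a # l)"
| "mtype (MCons x f) = map_option (\<lambda>(l, l'). (x # l, x # l')) (mtype f)"
| "mtype (MComp g f) = (case (mtype f, mtype g) of
      (Some (l1, l2), Some (l2', l3)) \<Rightarrow> if l2 = l2' then Some (l1, l3) else None
    | _ \<Rightarrow> None)"

lemma mtyped_iff_mtype: "mtyped f l1 l2 \<longleftrightarrow> mtype f = Some (l1, l2)"
proof
  show "mtyped f l1 l2 \<Longrightarrow> mtype f = Some (l1, l2)"
    by (induction rule: mtyped.induct) auto
  show "mtype f = Some (l1, l2) \<Longrightarrow> mtyped f l1 l2"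
    by (induction f arbitrary: l1 l2)
      (auto intro: mtyped.intros split: option.splits if_splits, metis ty_comp)
qed

lemma meqv_mperm: "meqv f g \<Longrightarrow> mperm f = mperm g"
  by (induction rule: meqv.induct) (auto simp: fun_eq_iff)

declare eq_trans [trans]

lemma meqv_refl: "mtype f \<noteq> None \<Longrightarrow> meqv f f"
  by (auto simp: mtyped_iff_mtype [symmetric] intro: eq_refl)

lemma meqv_comp:
  assumes "meqv f f'" "meqv g g'" "mtype (MComp g f) \<noteq> None"
  shows "meqv (MComp g f) (MComp g' f')"
proof -
  obtain l1 l2 l3 where "mtyped f l1 l2" "mtyped g l2 l3"
    using assms(3) by (auto simp: mtyped_iff_mtype split: option.splits if_splits)
  then show ?thesis by (rule eq_cong_comp [OF assms(1,2)])
qed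

lemma meqv_comp_left: "meqv g g' \<Longrightarrow> mtype (MComp g f) \<noteq> None \<Longrightarrow> meqv (MComp g f) (MComp g' f)"
  by (rule meqv_comp) (auto intro: meqv_refl split: option.splits)

lemma meqv_comp_right: "meqv f f' \<Longrightarrow> mtype (MComp g f) \<noteq> None \<Longrightarrow> meqv (MComp g f) (MComp g f')"
  by (rule meqv_comp) (auto intro: meqv_refl split: option.splits)

section \<open>Coherence\<close>

fun atoms :: "'c mterm \<Rightarrow> 'c mterm list" where
  "atoms (MId l) = []"
| "atoms (MSw a b l) = [MSw a b l]"
| "atoms (MCons x f) = map (MCons x) (atoms f)"
| "atoms (MComp g f) = atoms f @ atoms g"

fun comp_atoms :: "'c mterm list \<Rightarrow> 'c list \<Rightarrow> 'c mterm" where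
  "comp_atoms [] l = MId l"
| "comp_atoms (a # as) l = MComp (comp_atoms as l) a"

lemma mtype_comp_atoms_append:
  "mtype (comp_atoms as l2) = Some (l1, l2) \<Longrightarrow> mtype (comp_atoms bs l3) = Some (l2, l3)
    \<Longrightarrow> mtype (comp_atoms (as @ bs) l3) = Some (l1, l3)"
  by (induction as arbitrary: l1) (auto split: option.splits if_splits)

lemma mtype_comp_atoms_map_cons:
  "mtype (comp_atoms (map (MCons x) as) (x # l))
    = map_option (\<lambda>(l, l'). (x # l, x # l')) (mtype (comp_atoms as l))"
  by (induction as) (auto split: option.splits)

lemma meqv_comp_atoms_append:
  assumes "mtype (comp_atoms as l2) = Some (l1, l2)" "mtype (comp_atoms bs l3) = Some (l2, l3)"
  shows "meqv (comp_atoms (as @ bs) l3) (MComp (comp_atoms bs l3) (comp_atoms as l2))"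
  using assms
proof (induction as arbitrary: l1)
  case Nil
  then show ?case
    by (auto simp: mtyped_iff_mtype intro!: eq_sym [OF eq_id_right])
next
  case (Cons a as)
  then obtain l where a: "mtype a = Some (l1, l)" and as: "mtype (comp_atoms as l2) = Some (l, l2)"
    by (auto split: option.splits if_splits)
  have "meqv (comp_atoms ((a # as) @ bs) l3)
      (MComp (MComp (comp_atoms bs l3) (comp_atoms as l2)) a)"
    using Cons.IH [OF as Cons.prems(2)] a as mtype_comp_atoms_append [OF as Cons.prems(2)]
    by (auto intro: meqv_comp_left)
  also have "meqv \<dots> (MComp (comp_atoms bs l3) (comp_atoms (a # as) l2))"
    using a as Cons.prems(2) by (auto simp: mtyped_iff_mtype intro!: eq_sym [OF eq_assoc])
  finally show ?case .
qed

lemma meqv_cons_comp_atoms: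
  "mtype (comp_atoms as l2) = Some (l1, l2)
    \<Longrightarrow> meqv (MCons x (comp_atoms as l2)) (comp_atoms (map (MCons x) as) (x # l2))"
proof (induction as arbitrary: l1)
  case Nil
  then show ?case by (simp add: eq_cons_id)
next
  case (Cons a as)
  then obtain l where a: "mtype a = Some (l1, l)" and as: "mtype (comp_atoms as l2) = Some (l, l2)"
    by (auto split: option.splits if_splits)
  have "meqv (MCons x (comp_atoms (a # as) l2)) (MComp (MCons x (comp_atoms as l2)) (MCons x a))"
    using a as by (auto simp: mtyped_iff_mtype intro: eq_cons_comp)
  also have "meqv \<dots> (comp_atoms (map (MCons x) (a # as)) (x # l2))"
    using Cons.IH [OF as] a as by (auto simp: mtype_comp_atoms_map_cons intro: meqv_comp_left)
  finally show ?case .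
qed

lemma meqv_comp_atoms:
  "mtype f = Some (l1, l2) \<Longrightarrow> mtype (comp_atoms (atoms f) l2) = Some (l1, l2)
     \<and> meqv f (comp_atoms (atoms f) l2)"
proof (induction f arbitrary: l1 l2)
  case (MId l)
  then show ?case by (auto intro: meqv_refl)
next
  case (MSw a b l)
  then show ?case by (auto simp: mtyped_iff_mtype intro!: eq_sym [OF eq_id_left] ty_sw)
next
  case (MCons x f)
  then obtain k1 k2 where "mtype f = Some (k1, k2)" "l1 = x # k1" "l2 = x # k2" by auto
  with MCons.IH show ?case
    by (auto simp: mtype_comp_atoms_map_cons intro: eq_trans eq_cong_cons meqv_cons_comp_atoms)
next
  case (MComp g f)
  then obtain l where f: "mtype f = Some (l1, l)" and g: "mtype g = Some (l, l2)"
    by (auto split: option.splits if_splits)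
  have "meqv (MComp g f) (MComp (comp_atoms (atoms g) l2) (comp_atoms (atoms f) l))"
    using MComp.IH f g by (auto intro: meqv_comp)
  also have "meqv \<dots> (comp_atoms (atoms (MComp g f)) l2)"
    using MComp.IH f g by (auto intro: eq_sym meqv_comp_atoms_append)
  finally show ?case using MComp.IH f g by (auto intro: mtype_comp_atoms_append)
qed

text \<open>
  This discharges all associativity, unit and functoriality bookkeeping in the calculations
  below, which then consist only of naturality, hexagon and involutivity steps.
\<close>

lemma meqv_if_atoms_eq:
  assumes "mtype f = mtype g" "mtype f \<noteq> None" "atoms f = atoms g"
  shows "meqv f g"
proof -
  obtain l1 l2 where f: "mtype f = Some (l1, l2)"
    using assms(2) by auto
  then have "meqv f (comp_atoms (atoms g) l2)" "meqv g (comp_atoms (atoms g) l2)"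
    using meqv_comp_atoms assms(1,3) by metis+
  then show ?thesis
    by (blast intro: eq_trans eq_sym)
qed

section \<open>Moving entries to the front\<close>

fun remove_nth :: "nat \<Rightarrow> 'a list \<Rightarrow> 'a list" where
  "remove_nth _ [] = []"
| "remove_nth 0 (x # l) = l"
| "remove_nth (Suc k) (x # l) = x # remove_nth k l"

definition succ_above :: "nat \<Rightarrow> nat \<Rightarrow> nat" where
  "succ_above i m = (if m < i then m else Suc m)"

definition pred_above :: "nat \<Rightarrow> nat \<Rightarrow> nat" where
  "pred_above i q = (if q < i then q else q - 1)"

lemma pred_above_succ_above [simp]: "pred_above i (succ_above i m) = m"
  by (auto simp: pred_above_def succ_above_def)

lemma succ_above_pred_above [simp]: "q \<noteq> i \<Longrightarrow> succ_above i (pred_above i q) = q"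
  by (auto simp: pred_above_def succ_above_def)

lemma pred_above_Suc_Suc: "q \<noteq> i \<Longrightarrow> pred_above (Suc i) (Suc q) = Suc (pred_above i q)"
  by (auto simp: pred_above_def)

lemma pred_above_less: "p \<noteq> q \<Longrightarrow> p < n \<Longrightarrow> q < n \<Longrightarrow> pred_above p q < n - 1"
  by (auto simp: pred_above_def)

lemma length_remove_nth [simp]: "i < length l \<Longrightarrow> length (remove_nth i l) = length l - 1"
  by (induction i l rule: remove_nth.induct) auto

lemma nth_remove_nth:
  "i < length l \<Longrightarrow> j < length l - 1 \<Longrightarrow> remove_nth i l ! j = l ! succ_above i j"
  by (induction i l arbitrary: j rule: remove_nth.induct)
    (auto simp: succ_above_def nth_Cons split: nat.splits)

lemma remove_nth_remove_nth_commute: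
  "p \<noteq> q \<Longrightarrow> p < length l \<Longrightarrow> q < length l \<Longrightarrow>
    remove_nth (pred_above p q) (remove_nth p l) = remove_nth (pred_above q p) (remove_nth q l)"
proof (induction l arbitrary: p q)
  case (Cons x l)
  show ?case
  proof (cases p)
    case 0
    with Cons.prems obtain k where "q = Suc k" by (cases q) auto
    with 0 show ?thesis by (simp add: pred_above_def)
  next
    case (Suc j)
    show ?thesis
    proof (cases q)
      case 0
      with Suc show ?thesis by (simp add: pred_above_def)
    next
      case (Suc k)
      have "remove_nth (pred_above j k) (remove_nth j l)
          = remove_nth (pred_above k j) (remove_nth k l)"
        by (rule Cons.IH) (use \<open>p = Suc j\<close> Suc Cons.prems in auto)
      with \<open>p = Suc j\<close> Suc Cons.prems show ?thesis by (simp add: pred_above_Suc_Suc)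
    qed
  qed
qed simp

fun to_front :: "nat \<Rightarrow> 'c list \<Rightarrow> 'c mterm" where
  "to_front 0 l = MId l"
| "to_front (Suc k) [] = MId []"
| "to_front (Suc k) (x # l) = MComp (MSw x (l ! k) (remove_nth k l)) (MCons x (to_front k l))"

lemma mtype_to_front [simp]:
  "i < length l \<Longrightarrow> mtype (to_front i l) = Some (l, l ! i # remove_nth i l)"
  by (induction i l rule: to_front.induct) (auto simp: neq_Nil_conv)

lemma mperm_to_front_0: "i < length l \<Longrightarrow> mperm (to_front i l) 0 = i"
  by (induction i l rule: to_front.induct) auto

lemma mperm_to_front_Suc: "i < length l \<Longrightarrow> mperm (to_front i l) (Suc m) = succ_above i m"
proof (induction i l arbitrary: m rule: to_front.induct)
  case (3 k x l)
  then show ?case by (cases m) (auto simp: succ_above_def)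
qed (auto simp: succ_above_def)

definition to_front2 :: "nat \<Rightarrow> nat \<Rightarrow> 'c list \<Rightarrow> 'c mterm" where
  "to_front2 p q l =
    MComp (MCons (l ! p) (to_front (pred_above p q) (remove_nth p l))) (to_front p l)"

lemma mtype_to_front_pred_above:
  assumes "p \<noteq> q" "p < length l" "q < length l"
  shows "mtype (to_front (pred_above p q) (remove_nth p l))
    = Some (remove_nth p l, l ! q # remove_nth (pred_above p q) (remove_nth p l))"
proof -
  have "pred_above p q < length (remove_nth p l)"
    using pred_above_less [OF assms] assms by simp
  moreover have "remove_nth p l ! pred_above p q = l ! q"
    using assms pred_above_less [OF assms] by (simp add: nth_remove_nth)
  ultimately show ?thesis
    by simp
qed

lemma mtype_to_front2:
  "p \<noteq> q \<Longrightarrow> p < length l \<Longrightarrow> q < length l \<Longrightarrow>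
    mtype (to_front2 p q l)
      = Some (l, l ! p # l ! q # remove_nth (pred_above p q) (remove_nth p l))"
  by (simp add: to_front2_def mtype_to_front_pred_above)

text \<open>
  Naturality moves the inner \<^const>\<open>to_front\<close> past the swaps; the hexagon then rearranges
  the three swaps.
\<close>

lemma to_front2_swap_Cons:
  assumes "j \<le> k" "Suc k < length l"
    and tail_swap: "meqv
      (MComp (MSw (l ! j) (l ! Suc k) (remove_nth k (remove_nth j l))) (to_front2 j (Suc k) l))
      (to_front2 (Suc k) j l)"
  shows "meqv (MComp (MSw (l ! j) (l ! Suc k) (x # remove_nth k (remove_nth j l)))
      (to_front2 (Suc j) (Suc (Suc k)) (x # l)))
    (to_front2 (Suc (Suc k)) (Suc j) (x # l))"
proof -
  let ?y = "l ! j" and ?z = "l ! Suc k" and ?R = "remove_nth k (remove_nth j l)"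
  let ?Bj = "to_front j l" and ?Bk = "to_front (Suc k) l"
    and ?Bk' = "to_front k (remove_nth j l)" and ?Bj' = "to_front j (remove_nth (Suc k) l)"
  have z: "remove_nth j l ! k = ?z" and y: "remove_nth (Suc k) l ! j = ?y"
    using assms(1,2) by (simp_all add: nth_remove_nth succ_above_def)
  have R: "remove_nth j (remove_nth (Suc k) l) = ?R"
    using remove_nth_remove_nth_commute [of j "Suc k" l] assms(1,2) by (simp add: pred_above_def)
  have types: "mtype ?Bj = Some (l, ?y # remove_nth j l)"
    "mtype ?Bk = Some (l, ?z # remove_nth (Suc k) l)"
    "mtype ?Bk' = Some (remove_nth j l, ?z # ?R)"
    "mtype ?Bj' = Some (remove_nth (Suc k) l, ?y # ?R)"
    using assms(1,2) z y R by simp_all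
  have tail_swap': "meqv (MComp (MSw ?y ?z ?R) (MComp (MCons ?y ?Bk') ?Bj))
      (MComp (MCons ?z ?Bj') ?Bk)"
    using tail_swap assms(1,2) by (simp add: to_front2_def pred_above_def)
  have "meqv (MComp (MSw ?y ?z (x # ?R)) (to_front2 (Suc j) (Suc (Suc k)) (x # l)))
      (MComp (MComp (MSw ?y ?z (x # ?R)) (MCons ?y (MSw x ?z ?R)))
        (MComp (MComp (MCons ?y (MCons x ?Bk')) (MSw x ?y (remove_nth j l))) (MCons x ?Bj)))"
    using assms z types by (intro meqv_if_atoms_eq) (simp_all add: to_front2_def pred_above_def)
  also have "meqv \<dots> (MComp (MComp (MSw ?y ?z (x # ?R)) (MCons ?y (MSw x ?z ?R)))
        (MComp (MComp (MSw x ?y (?z # ?R)) (MCons x (MCons ?y ?Bk'))) (MCons x ?Bj)))"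
    using types by (intro meqv_comp_right meqv_comp_left eq_nat) (simp_all add: mtyped_iff_mtype)
  also have "meqv \<dots>
      (MComp (MComp (MSw ?y ?z (x # ?R)) (MComp (MCons ?y (MSw x ?z ?R)) (MSw x ?y (?z # ?R))))
        (MCons x (MComp (MCons ?y ?Bk') ?Bj)))"
    using types by (intro meqv_if_atoms_eq) simp_all
  also have "meqv \<dots>
      (MComp (MComp (MCons ?z (MSw x ?y ?R)) (MComp (MSw x ?z (?y # ?R)) (MCons x (MSw ?y ?z ?R))))
        (MCons x (MComp (MCons ?y ?Bk') ?Bj)))"
    using types by (intro meqv_comp_left eq_hex) simp
  also have "meqv \<dots> (MComp (MComp (MCons ?z (MSw x ?y ?R)) (MSw x ?z (?y # ?R)))
        (MCons x (MComp (MSw ?y ?z ?R) (MComp (MCons ?y ?Bk') ?Bj))))"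
    using types by (intro meqv_if_atoms_eq) simp_all
  also have "meqv \<dots> (MComp (MComp (MCons ?z (MSw x ?y ?R)) (MSw x ?z (?y # ?R)))
        (MCons x (MComp (MCons ?z ?Bj') ?Bk)))"
    using types by (intro meqv_comp_right eq_cong_cons tail_swap') simp
  also have "meqv \<dots> (MComp (MCons ?z (MSw x ?y ?R))
        (MComp (MComp (MSw x ?z (?y # ?R)) (MCons x (MCons ?z ?Bj'))) (MCons x ?Bk)))"
    using types by (intro meqv_if_atoms_eq) simp_all
  also have "meqv \<dots> (MComp (MCons ?z (MSw x ?y ?R))
        (MComp (MComp (MCons ?z (MCons x ?Bj')) (MSw x ?z (remove_nth (Suc k) l))) (MCons x ?Bk)))"
    using types
    by (intro meqv_comp_right meqv_comp_left eq_sym [OF eq_nat]) (simp_all add: mtyped_iff_mtype)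
  also have "meqv \<dots> (to_front2 (Suc (Suc k)) (Suc j) (x # l))"
    using assms y R types by (intro meqv_if_atoms_eq) (simp_all add: to_front2_def pred_above_def)
  finally show ?thesis .
qed

lemma to_front2_swap_less:
  "p < q \<Longrightarrow> q < length l \<Longrightarrow>
    meqv
      (MComp (MSw (l ! p) (l ! q) (remove_nth (pred_above p q) (remove_nth p l))) (to_front2 p q l))
      (to_front2 q p l)"
proof (induction l arbitrary: p q)
  case (Cons x l)
  show ?case
  proof (cases p)
    case 0
    with Cons.prems obtain k where "q = Suc k" "k < length l"
      by (cases q) auto
    with 0 show ?thesis
      by (intro meqv_if_atoms_eq) (simp_all add: to_front2_def pred_above_def)
  next
    case (Suc j)
    with Cons.prems obtain k where q: "q = Suc (Suc k)" and jk: "j \<le> k" and kl: "Suc k < length l"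
      by (auto dest!: less_imp_Suc_add)
    have "meqv
        (MComp (MSw (l ! j) (l ! Suc k) (remove_nth k (remove_nth j l))) (to_front2 j (Suc k) l))
        (to_front2 (Suc k) j l)"
      using Cons.IH [of j "Suc k"] jk kl by (simp add: pred_above_def)
    with Suc q jk kl show ?thesis
      using to_front2_swap_Cons [OF jk kl] by (simp add: pred_above_def)
  qed
qed simp

lemma to_front2_swap:
  assumes "p \<noteq> q" "p < length l" "q < length l"
  shows "meqv
      (MComp (MSw (l ! p) (l ! q) (remove_nth (pred_above p q) (remove_nth p l))) (to_front2 p q l))
      (to_front2 q p l)"
proof (cases "p < q")
  case True
  with assms show ?thesis by (blast intro: to_front2_swap_less)
next
  case False
  let ?R = "remove_nth (pred_above p q) (remove_nth p l)"
  have R: "remove_nth (pred_above q p) (remove_nth q l) = ?R"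
    using remove_nth_remove_nth_commute assms by metis
  have swap: "meqv (MComp (MSw (l ! q) (l ! p) ?R) (to_front2 q p l)) (to_front2 p q l)"
    using to_front2_swap_less [of q p l] False assms R by simp
  have types: "mtype (to_front2 q p l) = Some (l, l ! q # l ! p # ?R)"
    "mtype (to_front2 p q l) = Some (l, l ! p # l ! q # ?R)"
    using mtype_to_front2 [of q p l] mtype_to_front2 [of p q l] assms R by simp_all
  have "meqv (MComp (MSw (l ! p) (l ! q) ?R) (to_front2 p q l))
      (MComp (MSw (l ! p) (l ! q) ?R) (MComp (MSw (l ! q) (l ! p) ?R) (to_front2 q p l)))"
    using types by (intro meqv_comp_right eq_sym [OF swap]) simp
  also have "meqv \<dots>
      (MComp (MComp (MSw (l ! p) (l ! q) ?R) (MSw (l ! q) (l ! p) ?R)) (to_front2 q p l))"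
    using types by (intro meqv_if_atoms_eq) simp_all
  also have "meqv \<dots> (MComp (MId (l ! q # l ! p # ?R)) (to_front2 q p l))"
    using types by (intro meqv_comp_left eq_inv) simp
  also have "meqv \<dots> (to_front2 q p l)"
    using types by (intro meqv_if_atoms_eq) simp_all
  finally show ?thesis .
qed

section \<open>Normal forms\<close>

inductive is_nf :: "'c mterm \<Rightarrow> bool" where
  nf_Nil: "is_nf (MId [])"
| nf_Cons: "is_nf c \<Longrightarrow> i < length l \<Longrightarrow> mtype c = Some (remove_nth i l, l')
    \<Longrightarrow> is_nf (MComp (MCons (l ! i) c) (to_front i l))"

lemma is_nf_Cons_cases:
  "is_nf c \<Longrightarrow> mtype c = Some (l, x # l') \<Longrightarrow>
    \<exists>i c'. c = MComp (MCons x c') (to_front i l) \<and> is_nf c' \<and> i < length l \<and> l ! i = x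
      \<and> mtype c' = Some (remove_nth i l, l')"
  by (erule is_nf.cases) auto

lemma nf_id_exists: "\<exists>c. is_nf c \<and> mtype c = Some (l, l) \<and> meqv c (MId l)"
proof (induction l)
  case Nil
  show ?case by (intro exI [of _ "MId []"]) (auto intro: nf_Nil meqv_refl)
next
  case (Cons x l)
  then obtain c where c: "is_nf c" "mtype c = Some (l, l)" "meqv c (MId l)"
    by blast
  let ?d = "MComp (MCons x c) (to_front 0 (x # l))"
  have "is_nf ?d"
    using nf_Cons [OF c(1), of 0 "x # l"] c(2) by simp
  moreover have "meqv ?d (MId (x # l))"
  proof -
    have "meqv ?d (MComp (MCons x (MId l)) (to_front 0 (x # l)))"
      using c by (intro meqv_comp_left eq_cong_cons) simp_all
    also have "meqv \<dots> (MId (x # l))"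
      by (intro meqv_if_atoms_eq) simp_all
    finally show ?thesis .
  qed
  ultimately show ?case
    using c(2) by auto
qed

lemma is_nf_Cons_Cons_cases:
  assumes "is_nf c" "mtype c = Some (L, a # b # l)"
  obtains p q c' where "p \<noteq> q" "p < length L" "q < length L" "L ! p = a" "L ! q = b" "is_nf c'"
    "mtype c' = Some (remove_nth (pred_above p q) (remove_nth p L), l)"
    "c = MComp (MCons a (MComp (MCons b c') (to_front (pred_above p q) (remove_nth p L))))
      (to_front p L)"
proof -
  obtain i c1 where c: "c = MComp (MCons a c1) (to_front i L)" "is_nf c1" "i < length L" "L ! i = a"
    "mtype c1 = Some (remove_nth i L, b # l)"
    using is_nf_Cons_cases [OF assms] by blast
  obtain j c2 where c1: "c1 = MComp (MCons b c2) (to_front j (remove_nth i L))" "is_nf c2"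
    "j < length (remove_nth i L)" "remove_nth i L ! j = b"
    "mtype c2 = Some (remove_nth j (remove_nth i L), l)"
    using is_nf_Cons_cases [OF c(2,5)] by blast
  have "i \<noteq> succ_above i j" "succ_above i j < length L" "L ! succ_above i j = b"
    using c(3) c1(3,4) nth_remove_nth [of i L j] by (auto simp: succ_above_def)
  with c c1 show thesis
    by (intro that [of i "succ_above i j" c2]) simp_all
qed

lemma is_nf_to_front2:
  assumes "is_nf c" "p \<noteq> q" "p < length L" "q < length L"
    and "mtype c = Some (remove_nth (pred_above p q) (remove_nth p L), l)"
  shows "is_nf (MComp
    (MCons (L ! p) (MComp (MCons (L ! q) c) (to_front (pred_above p q) (remove_nth p L))))
    (to_front p L))"
proof -
  have q: "pred_above p q < length (remove_nth p L)" "remove_nth p L ! pred_above p q = L ! q"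
    using pred_above_less [OF assms(2-4)] nth_remove_nth [of p L "pred_above p q"] assms(2-4)
    by auto
  show ?thesis
    using nf_Cons [OF nf_Cons [OF assms(1) q(1)], where i = p and l = L] assms(3,5) q by simp
qed

text \<open>Two levels of a normal form make up a \<^const>\<open>to_front2\<close>, so \<open>to_front2_swap\<close> applies.\<close>

lemma nf_comp_swap:
  assumes "is_nf c" "mtype c = Some (L, a # b # l)"
  shows "\<exists>d. is_nf d \<and> mtype d = Some (L, b # a # l) \<and> meqv (MComp (MSw a b l) c) d"
proof -
  obtain p q c' where pq: "p \<noteq> q" "p < length L" "q < length L" "L ! p = a" "L ! q = b"
    and c': "is_nf c'" "mtype c' = Some (remove_nth (pred_above p q) (remove_nth p L), l)"
    and c: "c = MComp (MCons a (MComp (MCons b c') (to_front (pred_above p q) (remove_nth p L))))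
      (to_front p L)"
    using is_nf_Cons_Cons_cases [OF assms] by blast
  let ?R = "remove_nth (pred_above p q) (remove_nth p L)"
  have R: "remove_nth (pred_above q p) (remove_nth q L) = ?R"
    using remove_nth_remove_nth_commute pq(1-3) by metis
  let ?d = "MComp (MCons b (MComp (MCons a c') (to_front (pred_above q p) (remove_nth q L))))
    (to_front q L)"
  have nf_d: "is_nf ?d"
    using is_nf_to_front2 [of c' q p L l] c' pq R by simp
  have types: "mtype (to_front2 p q L) = Some (L, a # b # ?R)"
    "mtype (to_front2 q p L) = Some (L, b # a # ?R)"
    using mtype_to_front2 [of p q L] mtype_to_front2 [of q p L] pq R by simp_all
  have "meqv (MComp (MSw a b l) c)
      (MComp (MComp (MSw a b l) (MCons a (MCons b c'))) (to_front2 p q L))"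
    using c c' pq types mtype_to_front_pred_above [OF pq(1-3)]
    by (intro meqv_if_atoms_eq) (simp_all add: to_front2_def)
  also have "meqv \<dots> (MComp (MComp (MCons b (MCons a c')) (MSw a b ?R)) (to_front2 p q L))"
    using c' types by (intro meqv_comp_left eq_sym [OF eq_nat]) (simp_all add: mtyped_iff_mtype)
  also have "meqv \<dots> (MComp (MCons b (MCons a c')) (MComp (MSw a b ?R) (to_front2 p q L)))"
    using c' types by (intro meqv_if_atoms_eq) simp_all
  also have "meqv \<dots> (MComp (MCons b (MCons a c')) (to_front2 q p L))"
    using c' types to_front2_swap [OF pq(1-3)] pq by (intro meqv_comp_right) simp_all
  also have "meqv \<dots> ?d"
    using c' types pq R mtype_to_front_pred_above [of q p L]
    by (intro meqv_if_atoms_eq) (simp_all add: to_front2_def)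
  finally show ?thesis
    using nf_d c' R pq mtype_to_front_pred_above [of q p L] by auto
qed

lemma nf_comp_exists:
  "mtyped f l1 l2 \<Longrightarrow> is_nf c \<Longrightarrow> mtype c = Some (l0, l1) \<Longrightarrow>
    \<exists>d. is_nf d \<and> mtype d = Some (l0, l2) \<and> meqv (MComp f c) d"
proof (induction arbitrary: c l0 rule: mtyped.induct)
  case (ty_id l)
  then show ?case
    by (intro exI [of _ c]) (simp add: eq_id_left mtyped_iff_mtype)
next
  case (ty_sw a b l)
  then show ?case
    by (rule nf_comp_swap)
next
  case (ty_cons f l l' x)
  obtain i c' where c: "c = MComp (MCons x c') (to_front i l0)" "is_nf c'" "i < length l0"
    "l0 ! i = x" "mtype c' = Some (remove_nth i l0, l)"
    using is_nf_Cons_cases [OF ty_cons.prems] by blast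
  obtain d' where d': "is_nf d'" "mtype d' = Some (remove_nth i l0, l')" "meqv (MComp f c') d'"
    using ty_cons.IH [OF c(2,5)] by blast
  have f: "mtype f = Some (l, l')"
    using ty_cons.hyps by (simp add: mtyped_iff_mtype)
  let ?d = "MComp (MCons x d') (to_front i l0)"
  have "meqv (MComp (MCons x f) c) (MComp (MCons x (MComp f c')) (to_front i l0))"
    using c f by (intro meqv_if_atoms_eq) simp_all
  also have "meqv \<dots> ?d"
    using c f by (intro meqv_comp_left eq_cong_cons d'(3)) simp
  finally show ?case
    using nf_Cons [OF d'(1) c(3)] c(3,4) d'(2) by auto
next
  case (ty_comp f l1 l2 g l3)
  obtain d1 where d1: "is_nf d1" "mtype d1 = Some (l0, l2)" "meqv (MComp f c) d1"
    using ty_comp.IH(1) [OF ty_comp.prems] by blast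
  obtain d2 where d2: "is_nf d2" "mtype d2 = Some (l0, l3)" "meqv (MComp g d1) d2"
    using ty_comp.IH(2) [OF d1(1,2)] by blast
  have types: "mtype f = Some (l1, l2)" "mtype g = Some (l2, l3)"
    using ty_comp.hyps by (simp_all add: mtyped_iff_mtype)
  have "meqv (MComp (MComp g f) c) (MComp g (MComp f c))"
    using types ty_comp.prems by (intro meqv_if_atoms_eq) simp_all
  also have "meqv \<dots> (MComp g d1)"
    using types ty_comp.prems by (intro meqv_comp_right d1(3)) simp
  also have "meqv \<dots> d2"
    by (rule d2(3))
  finally show ?case
    using d2 by blast
qed

lemma nf_exists: "mtyped f l1 l2 \<Longrightarrow> \<exists>d. is_nf d \<and> mtype d = Some (l1, l2) \<and> meqv f d"
proof -
  assume f: "mtyped f l1 l2"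
  obtain c where c: "is_nf c" "mtype c = Some (l1, l1)" "meqv c (MId l1)"
    using nf_id_exists by blast
  obtain d where d: "is_nf d" "mtype d = Some (l1, l2)" "meqv (MComp f c) d"
    using nf_comp_exists [OF f c(1,2)] by blast
  have "meqv f (MComp f (MId l1))"
    using f by (intro meqv_if_atoms_eq) (simp_all add: mtyped_iff_mtype)
  also have "meqv \<dots> (MComp f c)"
    using f c by (intro meqv_comp_right eq_sym [OF c(3)]) (simp add: mtyped_iff_mtype)
  also have "meqv \<dots> d"
    by (rule d(3))
  finally show ?thesis
    using d by blast
qed

lemma nf_unique:
  "is_nf d1 \<Longrightarrow> is_nf d2 \<Longrightarrow> mtype d1 = Some (l1, l2) \<Longrightarrow> mtype d2 = Some (l1, l2) \<Longrightarrow>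
    (\<forall>i < length l2. mperm d1 i = mperm d2 i) \<Longrightarrow> d1 = d2"
proof (induction arbitrary: d2 l1 l2 rule: is_nf.induct)
  case nf_Nil
  then show ?case
    by (auto elim: is_nf.cases)
next
  case (nf_Cons c i l l')
  obtain i2 c2 where d2: "d2 = MComp (MCons (l ! i) c2) (to_front i2 l)" "is_nf c2" "i2 < length l"
    "mtype c2 = Some (remove_nth i2 l, l')"
    using is_nf_Cons_cases [OF nf_Cons.prems(1)] nf_Cons.prems(2,3) nf_Cons.hyps by fastforce
  have l2: "l2 = l ! i # l'"
    using nf_Cons.prems(2) nf_Cons.hyps by auto
  have "i2 = i"
    using nf_Cons.prems(4) [rule_format, of 0] d2(1,3) nf_Cons.hyps l2
    by (simp add: mperm_to_front_0)
  moreover have "mperm c j = mperm c2 j" if "j < length l'" for j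
  proof -
    have "succ_above i (mperm c j) = succ_above i (mperm c2 j)"
      using nf_Cons.prems(4) [rule_format, of "Suc j"] that d2(1,3) nf_Cons.hyps l2 \<open>i2 = i\<close>
      by (simp add: mperm_to_front_Suc)
    then show ?thesis
      by (metis pred_above_succ_above)
  qed
  ultimately show ?case
    using nf_Cons.IH [OF d2(2)] nf_Cons.hyps d2 by simp
qed

section \<open>Realising bijections\<close>

lemma mperm_inj: "inj (mperm f)"
proof (induction f)
  case (MSw a b l)
  then show ?case by (auto simp: inj_on_def)
next
  case (MCons x f)
  show ?case
  proof (rule injI)
    fix i j
    assume "mperm (MCons x f) i = mperm (MCons x f) j"
    then show "i = j"
      using injD [OF MCons] by (cases i; cases j) auto
  qed
next
  case (MComp g f)
  then show ?case
    using inj_compose [of "mperm f" "mperm g"] by (simp add: comp_def)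
qed simp

lemma mperm_nth:
  "mtyped f l1 l2 \<Longrightarrow>
    length l1 = length l2 \<and> (\<forall>i < length l2. mperm f i < length l1 \<and> l1 ! mperm f i = l2 ! i)"
proof (induction rule: mtyped.induct)
  case (ty_sw a b l)
  have "mperm (MSw a b l) i < length (a # b # l)
      \<and> (a # b # l) ! mperm (MSw a b l) i = (b # a # l) ! i"
    if "i < length (b # a # l)" for i
    using that by (cases i; cases "i - 1") auto
  then show ?case by simp
next
  case (ty_cons f l l' x)
  have "mperm (MCons x f) i < length (x # l) \<and> (x # l) ! mperm (MCons x f) i = (x # l') ! i"
    if "i < length (x # l')" for i
    using that ty_cons by (cases i) auto
  then show ?case
    using ty_cons by simp
qed auto

lemma bij_betw_mperm: "mtyped f l1 l2 \<Longrightarrow> bij_betw (mperm f) {..<length l2} {..<length l1}"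
proof -
  assume f: "mtyped f l1 l2"
  have "mperm f ` {..<length l2} \<subseteq> {..<length l2}"
    using mperm_nth [OF f] by auto
  moreover have "inj_on (mperm f) {..<length l2}"
    using mperm_inj inj_on_subset by blast
  ultimately show ?thesis
    using endo_inj_surj [of "{..<length l2}"] mperm_nth [OF f] by (simp add: bij_betw_def)
qed

lemma bij_betw_pred_above: "p < Suc m \<Longrightarrow> bij_betw (pred_above p) ({..<Suc m} - {p}) {..<m}"
  by (rule bij_betw_byWitness [where f' = "succ_above p"])
    (auto simp: pred_above_def succ_above_def)

lemma bij_betw_pred_above_Suc:
  assumes "bij_betw \<phi> {..<Suc n} {..<Suc m}"
  shows "bij_betw (\<lambda>j. pred_above (\<phi> 0) (\<phi> (Suc j))) {..<n} {..<m}"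
proof -
  have \<phi>0: "\<phi> 0 < Suc m"
    using bij_betwE [OF assms] by blast
  have "bij_betw Suc {..<n} ({..<Suc n} - {0})"
    by (simp add: lessThan_Suc_eq_insert_0)
  moreover have "bij_betw \<phi> ({..<Suc n} - {0}) ({..<Suc m} - {\<phi> 0})"
    using assms \<phi>0 by (intro bij_betw_DiffI) auto
  moreover have "bij_betw (pred_above (\<phi> 0)) ({..<Suc m} - {\<phi> 0}) {..<m}"
    using \<phi>0 by (rule bij_betw_pred_above)
  ultimately have "bij_betw (pred_above (\<phi> 0) \<circ> \<phi> \<circ> Suc) {..<n} {..<m}"
    by (blast intro: bij_betw_trans)
  then show ?thesis
    by (simp add: comp_def)
qed

lemma ex_mtyped_mperm_eq:
  "bij_betw \<phi> {..<length l2} {..<length l1} \<Longrightarrow> \<forall>i < length l2. l1 ! \<phi> i = l2 ! i \<Longrightarrow>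
    \<exists>f. mtyped f l1 l2 \<and> (\<forall>i < length l2. mperm f i = \<phi> i)"
proof (induction l2 arbitrary: l1 \<phi>)
  case Nil
  then have "l1 = []"
    using bij_betw_same_card by fastforce
  then show ?case
    by (auto intro: ty_id)
next
  case (Cons y l2)
  have len: "length l1 = Suc (length l2)"
    using bij_betw_same_card [OF Cons.prems(1)] by simp
  define i where "i = \<phi> 0"
  define \<psi> where "\<psi> = (\<lambda>j. pred_above i (\<phi> (Suc j)))"
  have i: "i < length l1" "l1 ! i = y"
    using Cons.prems by (auto simp: i_def bij_betw_def)
  have \<psi>: "bij_betw \<psi> {..<length l2} {..<length (remove_nth i l1)}"
    using bij_betw_pred_above_Suc [of \<phi> "length l2" "length l2"] Cons.prems(1) len i
    by (simp add: \<psi>_def i_def)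
  have \<phi>_Suc: "\<phi> (Suc j) = succ_above i (\<psi> j)" if "j < length l2" for j
  proof -
    have "\<phi> (Suc j) \<noteq> i"
      using Cons.prems(1) that by (auto simp: i_def bij_betw_def inj_on_def)
    then show ?thesis by (simp add: \<psi>_def)
  qed
  have "remove_nth i l1 ! \<psi> j = l2 ! j" if "j < length l2" for j
  proof -
    have "\<psi> j < length l1 - 1"
      using \<psi> that i by (auto simp: bij_betw_def)
    then have "remove_nth i l1 ! \<psi> j = l1 ! \<phi> (Suc j)"
      using nth_remove_nth [OF i(1)] \<phi>_Suc [OF that] by simp
    also have "\<dots> = l2 ! j"
      using Cons.prems(2) that by fastforce
    finally show ?thesis .
  qed
  then obtain f where f: "mtyped f (remove_nth i l1) l2" "\<forall>j < length l2. mperm f j = \<psi> j"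
    using Cons.IH [OF \<psi>] by blast
  let ?f = "MComp (MCons y f) (to_front i l1)"
  have "mtyped ?f l1 (y # l2)"
    using f(1) i by (simp add: mtyped_iff_mtype)
  moreover have "mperm ?f k = \<phi> k" if "k < length (y # l2)" for k
    using that f(2) i \<phi>_Suc
    by (cases k) (simp_all add: mperm_to_front_0 mperm_to_front_Suc i_def)
  ultimately show ?case
    by blast
qed

section \<open>The hom-sets\<close>

lemma meqv_iff_mperm:
  assumes f: "mtyped f l1 l2" and g: "mtyped g l1 l2"
  shows "meqv f g \<longleftrightarrow> (\<forall>i < length l2. mperm f i = mperm g i)"
proof
  show "meqv f g \<Longrightarrow> \<forall>i < length l2. mperm f i = mperm g i"
    by (simp add: meqv_mperm)
next
  assume mperm_eq: "\<forall>i < length l2. mperm f i = mperm g i"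
  obtain d1 where d1: "is_nf d1" "mtype d1 = Some (l1, l2)" "meqv f d1"
    using nf_exists [OF f] by blast
  obtain d2 where d2: "is_nf d2" "mtype d2 = Some (l1, l2)" "meqv g d2"
    using nf_exists [OF g] by blast
  have "d1 = d2"
    using nf_unique [OF d1(1) d2(1) d1(2) d2(2)] mperm_eq
      meqv_mperm [OF d1(3)] meqv_mperm [OF d2(3)]
    by simp
  then show "meqv f g"
    using d1(3) d2(3) by (blast intro: eq_trans eq_sym)
qed

lemma bij_betw_quotient:
  assumes "equiv A r"
    and "\<And>x y. x \<in> A \<Longrightarrow> y \<in> A \<Longrightarrow> F x = F y \<Longrightarrow> (x, y) \<in> r"
    and "\<And>x. x \<in> A \<Longrightarrow> G (r `` {x}) = F x"
  shows "bij_betw G (A // r) (F ` A)"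
proof (rule bij_betw_imageI)
  show "inj_on G (A // r)"
  proof (rule inj_onI)
    fix X Y
    assume X: "X \<in> A // r" and Y: "Y \<in> A // r" and "G X = G Y"
    obtain x where x: "x \<in> A" "X = r `` {x}"
      using X by (rule quotientE)
    obtain y where y: "y \<in> A" "Y = r `` {y}"
      using Y by (rule quotientE)
    have "(x, y) \<in> r"
      using assms(2,3) x y \<open>G X = G Y\<close> by simp
    then show "X = Y"
      using equiv_class_eq [OF assms(1)] x y by simp
  qed
  have "A // r = (\<lambda>x. r `` {x}) ` A"
    by (auto simp: quotient_def)
  then show "G ` (A // r) = F ` A"
    using assms(3) by (simp add: image_image)
qed

lemma equiv_slist_rel: "equiv {f. mtyped f l1 l2} (slist_rel l1 l2)"
proof (rule equivI)
  show "slist_rel l1 l2 \<subseteq> {f. mtyped f l1 l2} \<times> {f. mtyped f l1 l2}"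
    by (auto simp: slist_rel_def)
  show "refl_on {f. mtyped f l1 l2} (slist_rel l1 l2)"
    by (rule refl_onI) (auto simp: slist_rel_def intro: eq_refl)
  show "sym (slist_rel l1 l2)"
    by (rule symI) (auto simp: slist_rel_def intro: eq_sym)
  show "trans (slist_rel l1 l2)"
    by (rule transI) (auto simp: slist_rel_def intro: eq_trans)
qed

lemma assoc_bij_class:
  assumes "mtyped f l1 l2"
  shows "assoc_bij l2 (slist_rel l1 l2 `` {f}) = restrict (mperm f) {..<length l2}"
  unfolding assoc_bij_def
proof (rule the_elem_image_unique)
  show "slist_rel l1 l2 `` {f} \<noteq> {}"
    using assms by (auto simp: slist_rel_def intro: eq_refl)
  show "restrict (mperm g) {..<length l2} = restrict (mperm f) {..<length l2}"
    if "g \<in> slist_rel l1 l2 `` {f}" for g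
    using that by (auto simp: slist_rel_def dest: meqv_mperm)
qed

lemma slist_rel_if_restrict_mperm_eq:
  assumes "mtyped f l1 l2" "mtyped g l1 l2"
    and "restrict (mperm f) {..<length l2} = restrict (mperm g) {..<length l2}"
  shows "(f, g) \<in> slist_rel l1 l2"
proof -
  have "mperm f i = mperm g i" if "i < length l2" for i
    using fun_cong [OF assms(3), of i] that by simp
  then show ?thesis
    using assms(1,2) meqv_iff_mperm [OF assms(1,2)] by (simp add: slist_rel_def)
qed

lemma restrict_mperm_image:
  "(\<lambda>f. restrict (mperm f) {..<length l2}) ` {f. mtyped f l1 l2} =
    {\<phi> \<in> extensional {..<length l2}. bij_betw \<phi> {..<length l2} {..<length l1} \<and>
      (\<forall>i < length l2. l1 ! (\<phi> i) = l2 ! i)}"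
proof (intro equalityI subsetI)
  fix \<phi>
  assume "\<phi> \<in> (\<lambda>f. restrict (mperm f) {..<length l2}) ` {f. mtyped f l1 l2}"
  then obtain f where f: "mtyped f l1 l2" and \<phi>: "\<phi> = restrict (mperm f) {..<length l2}"
    by blast
  show "\<phi> \<in> {\<phi> \<in> extensional {..<length l2}. bij_betw \<phi> {..<length l2} {..<length l1} \<and>
      (\<forall>i < length l2. l1 ! (\<phi> i) = l2 ! i)}"
    using bij_betw_mperm [OF f] mperm_nth [OF f] by (simp add: \<phi>)
next
  fix \<phi>
  assume "\<phi> \<in> {\<phi> \<in> extensional {..<length l2}. bij_betw \<phi> {..<length l2} {..<length l1} \<and>
      (\<forall>i < length l2. l1 ! (\<phi> i) = l2 ! i)}"
  then obtain f where "mtyped f l1 l2" "\<forall>i < length l2. mperm f i = \<phi> i"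
    "\<phi> \<in> extensional {..<length l2}"
    using ex_mtyped_mperm_eq by blast
  then show "\<phi> \<in> (\<lambda>f. restrict (mperm f) {..<length l2}) ` {f. mtyped f l1 l2}"
    by (auto simp: image_iff fun_eq_iff extensional_def)
qed

theorem corollary2p9:
  fixes L1 L2 :: "'c list"
  shows "bij_betw (assoc_bij L2) (slist_hom L1 L2)
           {\<phi> \<in> extensional {..<length L2}.
              bij_betw \<phi> {..<length L2} {..<length L1} \<and>
              (\<forall>i < length L2. L1 ! (\<phi> i) = L2 ! i)}"
proof -
  have "bij_betw (assoc_bij L2) (slist_hom L1 L2)
      ((\<lambda>f. restrict (mperm f) {..<length L2}) ` {f. mtyped f L1 L2})"
    unfolding slist_hom_def
    by (rule bij_betw_quotient [OF equiv_slist_rel])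
      (simp_all add: slist_rel_if_restrict_mperm_eq assoc_bij_class)
  then show ?thesis
    by (simp add: restrict_mperm_image)
qed

end
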